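(* Let $(S,d)$ be a complete metric space with a Hausdorff topology $\sigma$ compatible with $d$. Let $\phi:S\to(-\infty,+\infty]$, $D(\phi)\ne\emptyset$, satisfy: there exist $A,B>0$, $u_\star\in S$ with $\phi\ge-A-Bd^2(\cdot,u_\star)$; $\sup_{n,m}d(u_n,u_m)<+\infty$, $u_n\stackrel{\sigma}{\rightharpoonup}u$ $\Rightarrow$ $\liminf_n\phi(u_n)\ge\phi(u)$; and $\sup_{n,m}\{d(u_n,u_m),\phi(u_n)\}<+\infty$ $\Rightarrow$ some subsequence of $(u_n)$ $\sigma$-converges. Let $\mathcal{P}_\epsilon:S\to(-\infty,+\infty]$ ($\epsilon>0$) satisfy $\mathcal{P}_\epsilon(\cdot)\ge-\tilde A-\tilde Bd^2(\cdot,\tilde u_\star)$ for some $\tilde A,\tilde B>0$, $\tilde u_\star\in S$, and, for every $\epsilon_n\to0$: $\sup_{n,m}d(u_n,u_m)<+\infty$, $u_n\stackrel{\sigma}{\rightharpoonup}u$ $\Rightarrow$ $\sup_n|\mathcal{P}_{\epsilon_n}(u_n)|<+\infty$. Set $\phi_\epsilon=\phi+\epsilon\mathcal{P}_\epsilon$. If $\epsilon(\tau)>0$ with $\epsilon(\tau)/\tau\to0$ as $\tau\to0$, then for all $u,u_\tau\in S$ with $u_\tau\stackrel{\sigma}{\rightharpoonup}u$ and $\sup_\tau\{\phi_{\epsilon(\tau)}(u_\tau),d(u_\tau,u)\}<+\infty$, $$\liminf_{\tau\to0}\frac{\phi_{\epsilon(\tau)}(u_\tau)-\mathcal{Y}_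\tau\phi_{\epsilon(\tau)}(u_\tau)}{\tau}\ge\frac12|\partial^-\phi|^2(u).$$
   Context: $\sigma$ compatible with $d$: if $u_n\stackrel{\sigma}{\rightharpoonup}u$, $v_n\stackrel{\sigma}{\rightharpoonup}v$ then $\liminf_n d(u_n,v_n)\ge d(u,v)$; if $d(u_n,v_n)\to0$ and $u_n\stackrel{\sigma}{\rightharpoonup}u$ then $v_n\stackrel{\sigma}{\rightharpoonup}u$. Local slope $|\partial\phi|(v)=\limsup_{w\stackrel{d}{\to}v}\frac{(\phi(v)-\phi(w))^+}{d(v,w)}$; relaxed slope $|\partial^-\phi|(u)=\inf\{\liminf_n|\partial\phi|(u_n): u_n\stackrel{\sigma}{\rightharpoonup}u,\ \sup_n\{d(u_n,u),\phi(u_n)\}<+\infty\}$; $\mathcal{Y}_\tau f(u)=\inf_{v\in S}\{f(v)+\frac1{2\tau}d^2(v,u)\}$. *)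

theory Defs
  imports "HOL-Analysis.Analysis" "HOL-Library.Extended_Real"
begin

text \<open>The metric d is dist on a complete metric space type; sigma is a separate topology.
Functionals take values in ereal (intended range (-infinity, +infinity]).\<close>

definition sigma_compatible :: "'a::metric_space topology \<Rightarrow> bool" where
  "sigma_compatible \<sigma> \<longleftrightarrow>
     (\<forall>u v x y. limitin \<sigma> u x sequentially \<and> limitin \<sigma> v y sequentially
         \<longrightarrow> liminf (\<lambda>n. ereal (dist (u n) (v n))) \<ge> ereal (dist x y)) \<and>
     (\<forall>u v x. (\<lambda>n. dist (u n) (v n)) \<longlonglongrightarrow> 0 \<and> limitin \<sigma> u x sequentially
         \<longrightarrow> limitin \<sigma> v x sequentially)"

text \<open>Local slope; +infinity outside the domain, and the positive part makes it 0 at isolated points.\<close>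
definition local_slope :: "('a::metric_space \<Rightarrow> ereal) \<Rightarrow> 'a \<Rightarrow> ereal" where
  "local_slope \<phi> v =
     (if \<phi> v = \<infinity> then \<infinity>
      else max 0 (Limsup (at v) (\<lambda>w. max 0 (\<phi> v - \<phi> w) / ereal (dist v w))))"

definition relaxed_slope :: "'a::metric_space topology \<Rightarrow> ('a \<Rightarrow> ereal) \<Rightarrow> 'a \<Rightarrow> ereal" where
  "relaxed_slope \<sigma> \<phi> u =
     Inf {liminf (\<lambda>n. local_slope \<phi> (s n)) | s.
            limitin \<sigma> s u sequentially \<and>
            (\<exists>M::real. \<forall>n. dist (s n) u \<le> M \<and> \<phi> (s n) \<le> ereal M)}"

definition moreau_yosida :: "real \<Rightarrow> ('a::metric_space \<Rightarrow> ereal) \<Rightarrow> 'a \<Rightarrow> ereal" where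
  "moreau_yosida \<tau> f u = (INF v. f v + ereal ((dist v u)\<^sup>2 / (2 * \<tau>)))"

end

theory Submission
  imports Defs
begin

(*
  Fix w = u_\<tau> and the radii r_k = \<tau> q^k (k = 0, ..., N), and let v_k minimise
  \<phi> + d\<^sup>2(\<cdot>, w) / (2 r_k). Minimality of v_k tested against v_(k+1), together with the slope
  bound |\<partial>\<phi>|(v_k) \<le> d(v_k, w) / r_k, telescopes to
    \<phi>(w) - Y_\<tau>\<phi>(w) \<ge> q (1 - q^N) \<tau> / 2 \<cdot> min_(1\<le>k\<le>N) |\<partial>\<phi>|\<^sup>2(v_k),
  a discrete version of De Giorgi's variational interpolation. Since d\<^sup>2(v_k, w) = O(\<tau>), the
  minimisers \<sigma>-converge to u with bounded energy as \<tau> \<rightarrow> 0, so the liminf of their slopes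
  dominates the relaxed slope. Estimating Y_\<tau>\<phi>_\<epsilon> from above at the \<tau>-minimiser of \<phi>
  alone costs (\<epsilon>/\<tau>)(P_\<epsilon>(u_\<tau>) - P_\<epsilon>(v_0)), which vanishes because P_\<epsilon> stays bounded
  along these sequences. Finally q (1 - q^N) can be taken arbitrarily close to 1.
*)

lemma power2_dist_triangle_le:
  fixes z w u0 :: "'a::metric_space"
  shows "(dist z u0)\<^sup>2 \<le> 2 * (dist z w)\<^sup>2 + 2 * (dist w u0)\<^sup>2"
proof -
  have "(dist z u0)\<^sup>2 \<le> (dist z w + dist w u0)\<^sup>2"
    by (simp add: dist_triangle power_mono)
  also have "\<dots> \<le> 2 * (dist z w)\<^sup>2 + 2 * (dist w u0)\<^sup>2"
    using zero_le_power2[of "dist z w - dist w u0"] by (simp add: power2_eq_square algebra_simps)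
  finally show ?thesis .
qed

lemma bounded_dist_imp_bounded_pairwise:
  assumes "\<And>n. dist (s n) u \<le> K"
  shows "\<exists>M. \<forall>n m. dist (s n) (s m) \<le> M"
  using assms dist_triangle2[of "s _" "s _" u] by (intro exI[of _ "2*K"] allI) (smt (verit))

lemma limitin_at_right_sequentially:
  assumes "limitin \<sigma> f l (at_right (0::real))" "t \<longlonglongrightarrow> 0" "\<And>n. 0 < t n"
  shows "limitin \<sigma> (\<lambda>n. f (t n)) l sequentially"
proof -
  have "filterlim t (at_right 0) sequentially"
    using assms(2,3) by (intro tendsto_imp_filterlim_at_right) auto
  then show ?thesis using assms(1) unfolding limitin_def by (auto simp: filterlim_iff)
qed

lemma le_liminf_power2:
  fixes a :: "nat \<Rightarrow> real"
  assumes a: "\<And>n. 0 \<le> a n" and b: "0 \<le> b" "ereal b \<le> liminf (\<lambda>n. ereal (a n))"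
  shows "ereal (b\<^sup>2) \<le> liminf (\<lambda>n. ereal ((a n)\<^sup>2))"
  unfolding le_Liminf_iff
proof (intro allI impI)
  fix y assume y: "y < ereal (b\<^sup>2)"
  show "\<forall>\<^sub>F n in sequentially. y < ereal ((a n)\<^sup>2)"
  proof (cases "y < 0")
    case True
    have "0 \<le> ereal ((a n)\<^sup>2)" for n by simp
    then show ?thesis using True by (intro always_eventually allI) (rule less_le_trans)
  next
    case False
    then obtain t where t: "y = ereal t" "0 \<le> t" "t < b\<^sup>2" using y by (cases y) auto
    then have "sqrt t < b" using real_sqrt_less_iff[of t "b\<^sup>2"] b by simp
    then have "ereal (sqrt t) < liminf (\<lambda>n. ereal (a n))"
      using b(2) by (metis less_ereal.simps(1) less_le_trans)
    then have "\<forall>\<^sub>F n in sequentially. sqrt t < a n" by (auto dest: less_LiminfD)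
    then show ?thesis
    proof eventually_elim
      case (elim n)
      then show ?case using real_sqrt_less_iff[of t "(a n)\<^sup>2"] a[of n] t by simp
    qed
  qed
qed

lemma ereal_abs_le_imp_real:
  "\<bar>x\<bar> \<le> ereal K \<Longrightarrow> x = ereal (real_of_ereal x) \<and> \<bar>real_of_ereal x\<bar> \<le> K"
  by (cases x) auto

lemma ereal_bound_from_perturbed_bound:
  assumes h: "a + ereal e * b \<le> ereal M" and b: "ereal L \<le> b" and e: "0 < e" "e \<le> 1"
    and L: "L \<le> 0" and a: "a \<noteq> -\<infinity>"
  shows "a \<le> ereal (M - L)"
proof (cases b)
  case (real b')
  have "L \<le> e * L" using e L by (simp add: mult_le_cancel_right1)
  also have "\<dots> \<le> e * b'" using b real e by (simp add: mult_left_mono)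
  finally have eb: "L \<le> e * b'" .
  show ?thesis
  proof (cases a)
    case (real a')
    then show ?thesis using h eb \<open>b = ereal b'\<close> by simp
  qed (use h a \<open>b = ereal b'\<close> in simp_all)
next
  case PInf
  then show ?thesis using h a e by (cases a) simp_all
next
  case MInf
  then show ?thesis using b by simp
qed

lemma ereal_less_half_square_real:
  fixes y l :: ereal
  assumes l: "0 \<le> l" and y: "y < l\<^sup>2 / 2"
  obtains t l' where "y \<le> ereal t" "0 \<le> l'" "l' = 0 \<or> ereal l' < l" "t < l'\<^sup>2 / 2"
proof (cases y)
  case MInf
  then show ?thesis by (intro that[of "-1" 0]) auto
next
  case PInf
  then show ?thesis using y by simp
next
  case (real t)
  show ?thesis
  proof (cases "t < 0")
    case True
    then show ?thesis using real by (intro that[of t 0]) auto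
  next
    case False
    have bound: "t < l'\<^sup>2 / 2" if "sqrt (2*t) < l'" for l'
    proof -
      have "(sqrt (2*t))\<^sup>2 < l'\<^sup>2" using that False by (intro power_strict_mono) auto
      then show ?thesis using False by simp
    qed
    show ?thesis
    proof (cases l)
      case PInf
      then show ?thesis using real False bound[of "sqrt (2*t) + 1"] by (intro that) auto
    next
      case (real l0)
      then have "2*t < l0\<^sup>2" using y \<open>y = ereal t\<close> by simp
      then have "sqrt (2*t) < l0" using real l real_sqrt_less_iff[of "2*t" "l0\<^sup>2"] by simp
      moreover have "0 \<le> (sqrt (2*t) + l0) / 2" using False l real by simp
      ultimately show ?thesis using real \<open>y = ereal t\<close> bound[of "(sqrt (2*t) + l0) / 2"]
        by (intro that[of t "(sqrt (2*t) + l0) / 2"]) auto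
    qed (use l in simp)
  qed
qed

lemma exists_geometric_factor:
  fixes y s :: real
  assumes "y < s / 2" "0 \<le> s"
  obtains q :: real and N :: nat where "0 < q" "q < 1" "1 \<le> N" "y < q * (1 - q^N) / 2 * s"
proof (cases "y < 0")
  case True
  then show ?thesis using assms by (intro that[of "1/2" 1]) (auto intro: mult_nonneg_nonneg)
next
  case False
  then have s: "0 < s" and t: "0 \<le> 2*y/s" "2*y/s < 1" using assms by (auto simp: field_simps)
  define q where "q = (1 + 2*y/s) / 2"
  have q: "0 < q" "q < 1" "2*y/s < q" using t unfolding q_def by auto
  have "2*y/s/q < 1" using q by (subst divide_less_eq_1_pos) auto
  then have "0 < 1 - 2*y/s/q" by simp
  from real_arch_pow_inv[OF this q(2)] obtain n where "q^n < 1 - 2*y/s/q" by blast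
  then have "q * q^n < q * (1 - 2*y/s/q)" using q by (intro mult_strict_left_mono)
  moreover have "q * (1 - 2*y/s/q) = q - 2*y/s" using q by (simp add: field_simps)
  moreover have "q * q^Suc n \<le> q * q^n" using q by (simp add: mult_left_le_one_le)
  ultimately have "2*y/s < q * (1 - q^Suc n)" by (simp add: right_diff_distrib)
  then show ?thesis using q s by (intro that[of q "Suc n"]) (auto simp: field_simps)
qed

text \<open>The telescoping step of the discrete variational interpolation: \<open>p k\<close> and \<open>d k\<close> are the value
  and the distance to the centre of the minimiser at radius \<open>\<tau> q^k\<close>.\<close>

lemma prox_chain_telescope:
  fixes p d :: "nat \<Rightarrow> real"
  assumes q: "0 < q" "q < 1" and \<tau>: "0 < \<tau>" and m: "0 \<le> m"
    and step: "\<And>k. k < N \<Longrightarrow> p k + (d k)\<^sup>2/(2*(\<tau>*q^k)) \<le> p (Suc k) + (d (Suc k))\<^sup>2/(2*(\<tau>*q^k))"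
    and slope: "\<And>k. 1 \<le> k \<Longrightarrow> k \<le> N \<Longrightarrow> m*(\<tau>*q^k) \<le> d k"
  shows "m\<^sup>2 * \<tau> * q * (1 - q^N) / 2 \<le> p N + (d N)\<^sup>2/(2*(\<tau>*q^N)) - (p 0 + (d 0)\<^sup>2/(2*\<tau>))"
  using step slope
proof (induction N)
  case 0
  then show ?case by simp
next
  case (Suc N)
  define r where "r = \<tau>*q^Suc N"
  have r: "0 < r" "\<tau>*q^N = r / q" unfolding r_def using q \<tau> by auto
  define D where "D = d (Suc N)"
  have "(m * r)\<^sup>2 \<le> D\<^sup>2"
    using Suc.prems(2)[of "Suc N"] m r unfolding r_def D_def by (intro power_mono) auto
  then have "(m * r)\<^sup>2 * (1 - q) / (2*r) \<le> D\<^sup>2 * (1 - q) / (2*r)"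
    using r q by (intro divide_right_mono mult_right_mono) auto
  moreover have "(m * r)\<^sup>2 * (1 - q) / (2*r) = m\<^sup>2 * r * (1 - q) / 2"
    using r by (simp add: power2_eq_square field_simps)
  ultimately have "m\<^sup>2 * r * (1 - q) / 2 \<le> D\<^sup>2 * (1 - q) / (2*r)" by simp
  also have "\<dots> = D\<^sup>2/(2*r) - D\<^sup>2/(2*(\<tau>*q^N))"
    unfolding r(2) using r q by (simp add: field_simps)
  finally have "m\<^sup>2 * r * (1 - q) / 2 \<le> D\<^sup>2/(2*r) - D\<^sup>2/(2*(\<tau>*q^N))" .
  moreover have "m\<^sup>2 * \<tau> * q * (1 - q^N) / 2 + m\<^sup>2 * r * (1 - q) / 2 = m\<^sup>2 * \<tau> * q * (1 - q^Suc N) / 2"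
    unfolding r_def by (simp add: field_simps)
  moreover have "p N + (d N)\<^sup>2/(2*(\<tau>*q^N)) \<le> p (Suc N) + D\<^sup>2/(2*(\<tau>*q^N))"
    using Suc.prems(1) unfolding D_def by simp
  moreover have "m\<^sup>2 * \<tau> * q * (1 - q^N) / 2 \<le> p N + (d N)\<^sup>2/(2*(\<tau>*q^N)) - (p 0 + (d 0)\<^sup>2/(2*\<tau>))"
    by (rule Suc.IH; rule Suc.prems; simp)
  ultimately show ?case unfolding D_def r_def by linarith
qed

section \<open>Proximal points and slopes\<close>

definition is_prox_point :: "('a::metric_space \<Rightarrow> ereal) \<Rightarrow> real \<Rightarrow> 'a \<Rightarrow> 'a \<Rightarrow> bool" where
  "is_prox_point f r w v \<longleftrightarrow> f v \<noteq> \<infinity> \<and>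
     (\<forall>z. f v + ereal ((dist v w)\<^sup>2 / (2*r)) \<le> f z + ereal ((dist z w)\<^sup>2 / (2*r)))"

lemma is_prox_point_le_center:
  assumes "is_prox_point f r w v"
  shows "f v + ereal ((dist v w)\<^sup>2 / (2*r)) \<le> f w"
  using assms unfolding is_prox_point_def by (metis add.right_neutral dist_self div_0 power_zero_numeral
      mult_zero_left zero_ereal_def)

lemma is_prox_point_value_le:
  assumes "0 < r" "is_prox_point f r w v"
  shows "f v \<le> f w"
proof -
  have "f v \<le> f v + ereal ((dist v w)\<^sup>2 / (2*r))" using assms(1) by (simp add: add_increasing2)
  then show ?thesis using is_prox_point_le_center[OF assms(2)] by (rule order_trans)
qed

lemma moreau_yosida_le:
  "moreau_yosida \<tau> f w \<le> f v + ereal ((dist v w)\<^sup>2 / (2*\<tau>))"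
  unfolding moreau_yosida_def by (rule INF_lower) simp

lemma is_prox_pointI:
  assumes "f v + ereal ((dist v w)\<^sup>2 / (2*r)) \<le> moreau_yosida r f w" "f v \<noteq> \<infinity>"
  shows "is_prox_point f r w v"
  using assms order_trans[OF assms(1) moreau_yosida_le] unfolding is_prox_point_def by blast

lemma perturbed_gap_lower_bound:
  fixes f g :: "'a::metric_space \<Rightarrow> ereal"
  assumes \<tau>: "0 < \<tau>" and fw: "f w = ereal a" "g w = ereal b" and fv: "f v = ereal a'" "g v = ereal b'"
  shows "ereal ((a + e*b - (a' + e*b' + (dist v w)\<^sup>2/(2*\<tau>))) / \<tau>)
     \<le> ((f w + ereal e * g w) - moreau_yosida \<tau> (\<lambda>x. f x + ereal e * g x) w) / ereal \<tau>"
proof -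
  have "moreau_yosida \<tau> (\<lambda>x. f x + ereal e * g x) w \<le> ereal (a' + e*b' + (dist v w)\<^sup>2/(2*\<tau>))"
    using moreau_yosida_le[of \<tau> "\<lambda>x. f x + ereal e * g x" w v] fv by simp
  then have "ereal (a + e*b) - ereal (a' + e*b' + (dist v w)\<^sup>2/(2*\<tau>))
      \<le> (f w + ereal e * g w) - moreau_yosida \<tau> (\<lambda>x. f x + ereal e * g x) w"
    using fw by (intro ereal_minus_mono) simp_all
  then show ?thesis using ereal_divide_right_mono[of _ _ "ereal \<tau>"] \<tau> by fastforce
qed

text \<open>For \<open>r \<le> 1/(8B)\<close> half of the penalty absorbs the quadratic lower bound of \<open>f\<close>: this is the
  coercivity behind the existence and the localisation of proximal points.\<close>

lemma prox_objective_lower_bound: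
  fixes f :: "'a::metric_space \<Rightarrow> ereal"
  assumes low: "\<And>x. f x \<ge> ereal (- A - B * (dist x u0)\<^sup>2)"
    and B: "B > 0" and r: "0 < r" "r \<le> 1/(8*B)"
  shows "ereal (- A - 2*B*(dist w u0)\<^sup>2 + (dist z w)\<^sup>2 / (4*r)) \<le> f z + ereal ((dist z w)\<^sup>2 / (2*r))"
proof -
  have "2*B \<le> 1/(4*r)" using r B by (simp add: field_simps)
  then have "2*B * (dist z w)\<^sup>2 \<le> (dist z w)\<^sup>2 / (4*r)"
    using mult_right_mono[of "2*B" "1/(4*r)" "(dist z w)\<^sup>2"] by simp
  moreover have "B * (dist z u0)\<^sup>2 \<le> 2*B*(dist z w)\<^sup>2 + 2*B*(dist w u0)\<^sup>2"
    using mult_left_mono[OF power2_dist_triangle_le[of z u0 w], of B] B by (simp add: algebra_simps)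
  moreover have "(dist z w)\<^sup>2 / (2*r) = (dist z w)\<^sup>2 / (4*r) + (dist z w)\<^sup>2 / (4*r)"
    by (simp add: field_simps)
  ultimately have "- A - 2*B*(dist w u0)\<^sup>2 + (dist z w)\<^sup>2 / (4*r)
      \<le> - A - B * (dist z u0)\<^sup>2 + (dist z w)\<^sup>2 / (2*r)"
    by linarith
  then have "ereal (- A - 2*B*(dist w u0)\<^sup>2 + (dist z w)\<^sup>2 / (4*r))
      \<le> ereal (- A - B * (dist z u0)\<^sup>2) + ereal ((dist z w)\<^sup>2 / (2*r))"
    by simp
  also have "\<dots> \<le> f z + ereal ((dist z w)\<^sup>2 / (2*r))"
    using low by (rule add_right_mono)
  finally show ?thesis .
qed

lemma prox_point_dist_le:
  fixes f :: "'a::metric_space \<Rightarrow> ereal"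
  assumes low: "\<And>x. f x \<ge> ereal (- A - B * (dist x u0)\<^sup>2)"
    and B: "B > 0" and r: "0 < r" "r \<le> 1/(8*B)"
    and prox: "is_prox_point f r w v" and fw: "f w = ereal c"
  shows "(dist v w)\<^sup>2 \<le> 4*r*(c + A + 2*B*(dist w u0)\<^sup>2)"
proof -
  have "ereal (- A - 2*B*(dist w u0)\<^sup>2 + (dist v w)\<^sup>2 / (4*r)) \<le> ereal c"
    using prox_objective_lower_bound[OF low B r] is_prox_point_le_center[OF prox] fw
    by (metis order_trans)
  then show ?thesis using r by (simp add: field_simps)
qed

lemma prox_difference_quotient_le:
  fixes c c' dv dz dvz r :: real
  assumes min: "c + dv\<^sup>2/(2*r) \<le> c' + dz\<^sup>2/(2*r)"
    and tri: "dz \<le> dv + dvz" and pos: "0 \<le> dz" "0 \<le> dv" "0 < dvz" "0 < r"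
  shows "(c - c') / dvz \<le> dv / r + dvz / (2*r)"
proof -
  have "c - c' \<le> (dz\<^sup>2 - dv\<^sup>2) / (2*r)" using min by (simp add: diff_divide_distrib)
  also have "dz\<^sup>2 - dv\<^sup>2 \<le> dvz * (2*dv + dvz)"
  proof (cases "dz \<le> dv")
    case True
    then have "dz\<^sup>2 \<le> dv\<^sup>2" using pos by (intro power_mono) auto
    then show ?thesis using pos by (smt (verit) mult_nonneg_nonneg)
  next
    case False
    then have "dz\<^sup>2 \<le> (dv + dvz)\<^sup>2" using tri pos by (intro power_mono) auto
    then show ?thesis by (simp add: power2_eq_square algebra_simps)
  qed
  finally have "c - c' \<le> dvz * (2*dv + dvz) / (2*r)" using pos by (simp add: divide_right_mono)
  then show ?thesis using pos by (simp add: field_simps)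
qed

lemma local_slope_prox_point_le:
  fixes f :: "'a::metric_space \<Rightarrow> ereal"
  assumes r: "0 < r" and prox: "is_prox_point f r w v" and fv: "f v \<noteq> -\<infinity>"
  shows "local_slope f v \<le> ereal (dist v w / r)"
proof -
  obtain c where c: "f v = ereal c" using prox fv unfolding is_prox_point_def by (cases "f v") auto
  have quotient_le: "max 0 (f v - f z) / ereal (dist v z) \<le> ereal (dist v w / r) + ereal e"
    if e: "0 < e" and z: "0 < dist z v" "dist z v < 2*r*e" for z e
  proof -
    have min: "ereal c + ereal ((dist v w)\<^sup>2 / (2*r)) \<le> f z + ereal ((dist z w)\<^sup>2 / (2*r))"
      using prox c unfolding is_prox_point_def by metis
    have bound: "0 \<le> dist v w / r + e" using r e by simp
    show ?thesis
    proof (cases "f z")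
      case PInf
      then show ?thesis using c bound by simp
    next
      case MInf
      then show ?thesis using min by simp
    next
      case (real c')
      have "(c - c') / dist v z \<le> dist v w / r + dist v z / (2*r)"
        using min real r z
        by (intro prox_difference_quotient_le) (auto simp: dist_commute intro: dist_triangle3)
      also have "\<dots> \<le> dist v w / r + e" using z r by (simp add: dist_commute field_simps)
      finally show ?thesis using real c z bound by (auto simp: dist_commute max_def)
    qed
  qed
  have "Limsup (at v) (\<lambda>z. max 0 (f v - f z) / ereal (dist v z)) \<le> ereal (dist v w / r)"
  proof (rule ereal_le_epsilon2, rule Limsup_bounded)
    fix e :: real assume "0 < e"
    then show "\<forall>\<^sub>F z in at v. max 0 (f v - f z) / ereal (dist v z) \<le> ereal (dist v w / r) + ereal e"
      unfolding eventually_at using r quotient_le by (intro exI[of _ "2*r*e"]) auto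
  qed
  then show ?thesis unfolding local_slope_def using c r by simp
qed

lemma local_slope_prox_point_real:
  fixes f :: "'a::metric_space \<Rightarrow> ereal"
  assumes "0 < r" "is_prox_point f r w v" "f v \<noteq> -\<infinity>"
  obtains s where "local_slope f v = ereal s" "0 \<le> s" "s \<le> dist v w / r"
proof -
  have "0 \<le> local_slope f v" using assms(2) unfolding is_prox_point_def local_slope_def by simp
  with local_slope_prox_point_le[OF assms] show ?thesis
    by (cases "local_slope f v") (auto intro: that)
qed

lemma relaxed_slope_le_liminf:
  assumes "limitin \<sigma> s u sequentially" "\<And>n. dist (s n) u \<le> M" "\<And>n. f (s n) \<le> ereal M"
  shows "relaxed_slope \<sigma> f u \<le> liminf (\<lambda>n. local_slope f (s n))"
  unfolding relaxed_slope_def using assms by (intro Inf_lower) blast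

lemma relaxed_slope_nonneg: "0 \<le> relaxed_slope \<sigma> f u"
  unfolding relaxed_slope_def
  by (intro Inf_greatest) (auto intro!: Liminf_bounded simp: local_slope_def)

section \<open>Existence and localisation of proximal points\<close>

locale moreau_yosida_setting =
  fixes \<sigma> :: "'a::metric_space topology" and \<phi> :: "'a \<Rightarrow> ereal" and A B :: real and u0 :: 'a
  assumes sigma_topspace: "topspace \<sigma> = UNIV"
    and sigma_comp: "sigma_compatible \<sigma>"
    and phi_not_MInf: "\<And>x. \<phi> x \<noteq> -\<infinity>"
    and phi_lower: "\<And>x. ereal (- A - B * (dist x u0)\<^sup>2) \<le> \<phi> x"
    and B_pos: "0 < B"
    and phi_lsc: "\<And>s x. (\<exists>M. \<forall>n m. dist (s n) (s m) \<le> M) \<Longrightarrow> limitin \<sigma> s x sequentially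
        \<Longrightarrow> \<phi> x \<le> liminf (\<lambda>n. \<phi> (s n))"
    and phi_compact: "\<And>s :: nat \<Rightarrow> 'a. (\<exists>M::real. \<forall>n m. dist (s n) (s m) \<le> M \<and> \<phi> (s n) \<le> ereal M)
        \<Longrightarrow> \<exists>r x. strict_mono r \<and> limitin \<sigma> (s \<circ> r) x sequentially"
begin

lemma dist_lsc:
  assumes "limitin \<sigma> s x sequentially"
  shows "ereal (dist x w) \<le> liminf (\<lambda>n. ereal (dist (s n) w))"
  using sigma_comp assms sigma_topspace unfolding sigma_compatible_def by auto

lemma limitin_dist_tendsto_zero:
  assumes "(\<lambda>n. dist (s n) (t n)) \<longlonglongrightarrow> 0" "limitin \<sigma> s x sequentially"
  shows "limitin \<sigma> t x sequentially"
  using sigma_comp assms unfolding sigma_compatible_def by blast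

lemma prox_objective_lsc:
  assumes r: "0 < r" and bdd: "\<exists>M. \<forall>n m. dist (s n) (s m) \<le> M" and lim: "limitin \<sigma> s x sequentially"
  shows "\<phi> x + ereal ((dist x w)\<^sup>2 / (2*r))
     \<le> liminf (\<lambda>n. \<phi> (s n) + ereal ((dist (s n) w)\<^sup>2 / (2*r)))"
proof -
  have quad: "ereal (1/(2*r)) * ereal ((dist x w)\<^sup>2)
      \<le> ereal (1/(2*r)) * liminf (\<lambda>n. ereal ((dist (s n) w)\<^sup>2))"
    using le_liminf_power2[OF _ _ dist_lsc[OF lim]] r by (intro ereal_mult_left_mono) auto
  also have "\<dots> = liminf (\<lambda>n. ereal (1/(2*r)) * ereal ((dist (s n) w)\<^sup>2))"
    using r by (intro Liminf_ereal_mult_left[symmetric]) auto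
  finally have quad: "ereal ((dist x w)\<^sup>2 / (2*r)) \<le> liminf (\<lambda>n. ereal ((dist (s n) w)\<^sup>2 / (2*r)))"
    by simp
  have phi: "\<phi> x \<le> liminf (\<lambda>n. \<phi> (s n))" by (rule phi_lsc[OF bdd lim])
  have "\<phi> x + ereal ((dist x w)\<^sup>2 / (2*r))
      \<le> liminf (\<lambda>n. \<phi> (s n)) + liminf (\<lambda>n. ereal ((dist (s n) w)\<^sup>2 / (2*r)))"
    using phi quad by (rule add_mono)
  also have "\<dots> \<le> liminf (\<lambda>n. \<phi> (s n) + ereal ((dist (s n) w)\<^sup>2 / (2*r)))"
    using phi quad phi_not_MInf[of x] by (intro ereal_liminf_add_mono) auto
  finally show ?thesis .
qed

lemma moreau_yosida_finite:
  assumes r: "0 < r" "r \<le> 1/(8*B)" and w: "\<phi> w \<noteq> \<infinity>"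
  obtains y where "moreau_yosida r \<phi> w = ereal y"
proof -
  have "ereal (- A - 2*B*(dist w u0)\<^sup>2) \<le> \<phi> z + ereal ((dist z w)\<^sup>2 / (2*r))" for z
    by (rule order_trans[OF _ prox_objective_lower_bound[OF phi_lower B_pos r]]) (use r in simp)
  then have "ereal (- A - 2*B*(dist w u0)\<^sup>2) \<le> moreau_yosida r \<phi> w"
    unfolding moreau_yosida_def by (rule INF_greatest)
  moreover have "moreau_yosida r \<phi> w \<le> \<phi> w" using moreau_yosida_le[of r \<phi> w w] by simp
  ultimately show ?thesis using w that by (cases "moreau_yosida r \<phi> w") auto
qed

lemma prox_point_exists:
  assumes r: "0 < r" "r \<le> 1/(8*B)" and w: "\<phi> w \<noteq> \<infinity>"
  obtains v where "is_prox_point \<phi> r w v"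
proof -
  define g where "g z = \<phi> z + ereal ((dist z w)\<^sup>2 / (2*r))" for z
  obtain y where y: "moreau_yosida r \<phi> w = ereal y" using moreau_yosida_finite[OF r w] .
  have "\<exists>z. g z < ereal (y + 1 / Suc n)" for n
  proof -
    have "moreau_yosida r \<phi> w < ereal (y + 1 / Suc n)" using y by simp
    then show ?thesis unfolding moreau_yosida_def INF_less_iff g_def by blast
  qed
  then obtain z where z: "\<And>n. g (z n) < ereal (y + 1 / Suc n)" by metis
  have z_le: "g (z n) \<le> ereal (y + 1)" for n
    using z[of n] by (rule order_trans[OF less_imp_le]) simp_all
  define L where "L = - A - 2*B*(dist w u0)\<^sup>2"
  have "(dist (z n) w)\<^sup>2 \<le> 4*r*(y + 1 - L)" for n
    using order_trans[OF prox_objective_lower_bound[OF phi_lower B_pos r] z_le[unfolded g_def], of n] r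
    unfolding L_def by (simp add: field_simps)
  then have "dist (z n) w \<le> sqrt (4*r*(y + 1 - L))" for n by (simp add: real_le_rsqrt)
  then have z_pair: "dist (z n) (z m) \<le> 2 * sqrt (4*r*(y + 1 - L))" for n m
    using dist_triangle2[of "z n" "z m" w] by (smt (verit))
  have phi_le_g: "\<phi> v \<le> g v" for v unfolding g_def using r by (simp add: add_increasing2)
  define K where "K = max (2 * sqrt (4*r*(y + 1 - L))) (y + 1)"
  have "dist (z n) (z m) \<le> K" for n m
    using z_pair[of n m] max.cobounded1 unfolding K_def by (rule order_trans)
  moreover have "\<phi> (z n) \<le> ereal K" for n
    using order_trans[OF phi_le_g z_le] by (rule order_trans) (simp add: K_def)
  ultimately obtain \<rho> x where \<rho>: "strict_mono \<rho>" and lim: "limitin \<sigma> (z \<circ> \<rho>) x sequentially"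
    using phi_compact by blast
  have "g x \<le> liminf (\<lambda>n. g (z (\<rho> n)))"
    unfolding g_def using prox_objective_lsc[OF r(1) _ lim] z_pair by (auto simp: comp_def)
  also have "\<dots> \<le> liminf (\<lambda>n. ereal (y + 1 / Suc (\<rho> n)))"
    using z by (intro Liminf_mono always_eventually) (simp add: less_imp_le)
  also have "\<dots> = ereal y"
  proof (rule lim_imp_Liminf)
    have "(\<lambda>n. 1 / real (Suc (\<rho> n))) \<longlonglongrightarrow> 0"
      using LIMSEQ_subseq_LIMSEQ[OF LIMSEQ_inverse_real_of_nat \<rho>] by (simp add: comp_def inverse_eq_divide)
    then show "(\<lambda>n. ereal (y + 1 / Suc (\<rho> n))) \<longlonglongrightarrow> ereal y"
      using tendsto_add[OF tendsto_const, of _ 0 sequentially y] by (simp add: lim_ereal)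
  qed simp
  finally have "g x \<le> moreau_yosida r \<phi> w" using y by simp
  moreover from this have "\<phi> x \<noteq> \<infinity>" using order_trans[OF phi_le_g] y by force
  ultimately show ?thesis unfolding g_def by (intro that is_prox_pointI)
qed

lemma prox_point_dist_le_uniform:
  assumes r: "0 < r" "r \<le> 1/(8*B)" and v: "is_prox_point \<phi> r w v"
    and w: "\<phi> w = ereal c" "c \<le> \<Phi>" "dist w u \<le> M"
  shows "(dist v w)\<^sup>2 \<le> 4 * r * (\<Phi> + A + 2*B*(M + dist u u0)\<^sup>2)"
proof -
  have "dist w u0 \<le> M + dist u u0" using w(3) dist_triangle[of w u0 u] by simp
  then have "(dist w u0)\<^sup>2 \<le> (M + dist u u0)\<^sup>2" by (intro power_mono) auto
  then have "c + A + 2*B*(dist w u0)\<^sup>2 \<le> \<Phi> + A + 2*B*(M + dist u u0)\<^sup>2"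
    using w(2) B_pos by (simp add: add_mono)
  then have "4 * r * (c + A + 2*B*(dist w u0)\<^sup>2) \<le> 4 * r * (\<Phi> + A + 2*B*(M + dist u u0)\<^sup>2)"
    using r(1) by (simp add: mult_left_mono)
  then show ?thesis
    using prox_point_dist_le[OF phi_lower B_pos r v w(1)] by (rule order_trans[rotated])
qed

lemma prox_points_converge:
  assumes w: "limitin \<sigma> w u sequentially" "\<And>n. dist (w n) u \<le> M"
    and w_val: "\<And>n. \<phi> (w n) = ereal (c n)" "\<And>n. c n \<le> \<Phi>"
    and r: "\<And>n. 0 < r n" "\<And>n. r n \<le> 1/(8*B)" "r \<longlonglongrightarrow> 0"
    and v: "\<And>n. is_prox_point \<phi> (r n) (w n) (v n)"
  shows "limitin \<sigma> v u sequentially" and "\<exists>K. \<forall>n. dist (v n) u \<le> K \<and> \<phi> (v n) \<le> ereal K"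
proof -
  define C where "C = \<Phi> + A + 2*B*(M + dist u u0)\<^sup>2"
  have dist_sq: "(dist (v n) (w n))\<^sup>2 \<le> 4 * r n * C" for n
    unfolding C_def using prox_point_dist_le_uniform[OF r(1,2) v w_val w(2)] .
  then have near: "dist (v n) (w n) \<le> sqrt (4 * C * r n)" for n
    by (simp add: real_le_rsqrt algebra_simps)
  have "C \<ge> 0" using order_trans[OF zero_le_power2 dist_sq[of 0]] r(1)[of 0]
    by (simp add: zero_le_mult_iff)
  have "(\<lambda>n. sqrt (4 * C * r n)) \<longlonglongrightarrow> 0"
    using tendsto_real_sqrt[OF tendsto_mult_right_zero[OF r(3)]] by simp
  moreover have "\<forall>\<^sub>F n in sequentially. norm (dist (w n) (v n)) \<le> sqrt (4 * C * r n)"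
    using near by (simp add: dist_commute)
  ultimately have "(\<lambda>n. dist (w n) (v n)) \<longlonglongrightarrow> 0" by (metis Lim_null_comparison)
  then show "limitin \<sigma> v u sequentially" using w(1) by (rule limitin_dist_tendsto_zero)
  have "dist (v n) u \<le> sqrt (C / (2*B)) + M" for n
  proof -
    have "4 * C * r n \<le> C / (2*B)"
      using mult_left_mono[OF r(2)[of n], of "4*C"] \<open>C \<ge> 0\<close> B_pos by (simp add: field_simps)
    then have "dist (v n) (w n) \<le> sqrt (C / (2*B))"
      using near[of n] by (metis real_sqrt_le_mono order_trans)
    then show ?thesis using dist_triangle[of "v n" u "w n"] w(2)[of n] by simp
  qed
  moreover have "\<phi> (v n) \<le> ereal \<Phi>" for n
    using is_prox_point_value_le[OF r(1) v, of n] w_val[of n] by (metis ereal_less_eq(3) order_trans)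
  ultimately show "\<exists>K. \<forall>n. dist (v n) u \<le> K \<and> \<phi> (v n) \<le> ereal K"
    by (intro exI[of _ "max (sqrt (C / (2*B)) + M) \<Phi>"] allI conjI)
      (simp_all add: le_max_iff_disj)
qed

lemma prox_points_with_slopes:
  assumes r: "\<And>k. 0 < r k" "\<And>k. r k \<le> 1/(8*B)" and w: "\<phi> w \<noteq> \<infinity>"
  obtains v p s where "\<And>k. is_prox_point \<phi> (r k) w (v k)" "\<And>k. \<phi> (v k) = ereal (p k)"
    "\<And>k. local_slope \<phi> (v k) = ereal (s k)" "\<And>k. 0 \<le> s k" "\<And>k. s k \<le> dist (v k) w / r k"
proof -
  have "\<exists>v. is_prox_point \<phi> (r k) w v" for k
    using prox_point_exists[OF r(1)[of k] r(2)[of k] w] by blast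
  then obtain v where v: "\<And>k. is_prox_point \<phi> (r k) w (v k)" by metis
  have "\<exists>p. \<phi> (v k) = ereal p" for k
    using v[of k] phi_not_MInf[of "v k"] unfolding is_prox_point_def by (cases "\<phi> (v k)") auto
  then obtain p where "\<And>k. \<phi> (v k) = ereal (p k)" by metis
  moreover have "\<exists>s. local_slope \<phi> (v k) = ereal s \<and> 0 \<le> s \<and> s \<le> dist (v k) w / r k" for k
    using local_slope_prox_point_real[OF r(1) v phi_not_MInf] by metis
  then obtain s where "\<And>k. local_slope \<phi> (v k) = ereal (s k) \<and> 0 \<le> s k \<and> s k \<le> dist (v k) w / r k"
    by metis
  ultimately show ?thesis using v that by blast
qed

lemma prox_gap_ge_slope:
  assumes q: "0 < q" "q < 1" and N: "1 \<le> N" and \<tau>: "0 < \<tau>" "\<tau> \<le> 1/(8*B)"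
    and w: "\<phi> w = ereal c"
  obtains v0 c0 r v s where "is_prox_point \<phi> \<tau> w v0" "\<phi> v0 = ereal c0"
    "0 < r" "r \<le> \<tau>" "is_prox_point \<phi> r w v" "local_slope \<phi> v = ereal s"
    "s\<^sup>2 * \<tau> * q * (1 - q^N) / 2 \<le> c - (c0 + (dist v0 w)\<^sup>2/(2*\<tau>))"
proof -
  define r where "r k = \<tau> * q^k" for k
  have r: "0 < r k" "r k \<le> \<tau>" for k
    unfolding r_def using q \<tau> by (auto simp: power_le_one mult_left_le)
  have r8: "r k \<le> 1/(8*B)" for k using r(2)[of k] \<tau>(2) by linarith
  have "\<phi> w \<noteq> \<infinity>" using w by simp
  then obtain v p s where v: "\<And>k. is_prox_point \<phi> (r k) w (v k)" and p: "\<And>k. \<phi> (v k) = ereal (p k)"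
    and s: "\<And>k. local_slope \<phi> (v k) = ereal (s k)" "\<And>k. 0 \<le> s k" "\<And>k. s k \<le> dist (v k) w / r k"
    by (rule prox_points_with_slopes[of r, OF r(1) r8]) blast
  define d where "d k = dist (v k) w" for k
  define m where "m = Min (s ` {1..N})"
  have "m \<in> s ` {1..N}" unfolding m_def using N by (intro Min_in) auto
  then obtain K where K: "K \<in> {1..N}" "s K = m" by auto
  have m_le: "m*(\<tau>*q^k) \<le> d k" if "1 \<le> k" "k \<le> N" for k
  proof -
    have "m \<le> s k" unfolding m_def using that by (intro Min_le) auto
    then have "m \<le> d k / r k" using s(3)[of k] unfolding d_def by linarith
    then show ?thesis using r(1)[of k] unfolding r_def by (simp add: field_simps)
  qed
  have step: "p k + (d k)\<^sup>2/(2*(\<tau>*q^k)) \<le> p (Suc k) + (d (Suc k))\<^sup>2/(2*(\<tau>*q^k))" for k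
    using v[of k] p unfolding is_prox_point_def d_def r_def by (metis plus_ereal.simps(1) ereal_less_eq(3))
  have "m\<^sup>2 * \<tau> * q * (1 - q^N) / 2 \<le> p N + (d N)\<^sup>2/(2*(\<tau>*q^N)) - (p 0 + (d 0)\<^sup>2/(2*\<tau>))"
    using K s(2) by (intro prox_chain_telescope[OF q \<tau>(1) _ step m_le]) auto
  moreover have "p N + (d N)\<^sup>2/(2*(\<tau>*q^N)) \<le> c"
    using is_prox_point_le_center[OF v[of N]] p w unfolding d_def r_def by simp
  ultimately have "(s K)\<^sup>2 * \<tau> * q * (1 - q^N) / 2 \<le> c - (p 0 + (dist (v 0) w)\<^sup>2/(2*\<tau>))"
    using K(2) unfolding d_def by simp
  moreover have "is_prox_point \<phi> \<tau> w (v 0)" using v[of 0] unfolding r_def by simp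
  ultimately show ?thesis using that p r v s(1) by blast
qed

lemma prox_gap_along_sequence:
  assumes w: "limitin \<sigma> w u sequentially" "\<And>n. dist (w n) u \<le> M"
    and c: "\<And>n. \<phi> (w n) = ereal (c n)" "\<And>n. c n \<le> \<Phi>"
    and t: "t \<longlonglongrightarrow> 0" "\<And>n. 0 < t n" "\<And>n. t n \<le> 1/(8*B)"
    and q: "0 < q" "q < 1" "1 \<le> N"
  obtains v0 c0 K s where "\<And>n. \<phi> (v0 n) = ereal (c0 n)"
    "limitin \<sigma> v0 u sequentially" "\<And>n. dist (v0 n) u \<le> K"
    "\<And>n. (s n)\<^sup>2 * t n * q * (1 - q^N) / 2 \<le> c n - (c0 n + (dist (v0 n) (w n))\<^sup>2/(2 * t n))"
    "relaxed_slope \<sigma> \<phi> u \<le> liminf (\<lambda>n. ereal (s n))"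
proof -
  have "\<exists>v0 c0 r v s. is_prox_point \<phi> (t n) (w n) v0 \<and> \<phi> v0 = ereal c0 \<and> 0 < r \<and> r \<le> t n \<and>
      is_prox_point \<phi> r (w n) v \<and> local_slope \<phi> v = ereal s \<and>
      s\<^sup>2 * t n * q * (1 - q^N) / 2 \<le> c n - (c0 + (dist v0 (w n))\<^sup>2/(2 * t n))" for n
    by (rule prox_gap_ge_slope[OF q t(2) t(3) c(1)]) blast
  then obtain v0 c0 r v s where v0: "\<And>n. is_prox_point \<phi> (t n) (w n) (v0 n)" "\<And>n. \<phi> (v0 n) = ereal (c0 n)"
    and r: "\<And>n. 0 < r n" "\<And>n. r n \<le> t n" and v: "\<And>n. is_prox_point \<phi> (r n) (w n) (v n)"
    and s: "\<And>n. local_slope \<phi> (v n) = ereal (s n)"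
    and gap: "\<And>n. (s n)\<^sup>2 * t n * q * (1 - q^N) / 2 \<le> c n - (c0 n + (dist (v0 n) (w n))\<^sup>2/(2 * t n))"
    by metis
  have "r \<longlonglongrightarrow> 0"
    by (rule tendsto_sandwich[of "\<lambda>n. 0" _ _ t]) (use r t in \<open>auto simp: less_imp_le\<close>)
  note v_conv = prox_points_converge[OF w c r(1) order_trans[OF r(2) t(3)] \<open>r \<longlonglongrightarrow> 0\<close> v]
  obtain K where "\<And>n. dist (v n) u \<le> K" "\<And>n. \<phi> (v n) \<le> ereal K" using v_conv(2) by blast
  from relaxed_slope_le_liminf[where f=\<phi>, OF v_conv(1) this]
  have slope: "relaxed_slope \<sigma> \<phi> u \<le> liminf (\<lambda>n. ereal (s n))" by (simp only: s)
  note v0_conv = prox_points_converge[OF w c t(2,3,1) v0(1)]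
  obtain K0 where K0: "\<And>n. dist (v0 n) u \<le> K0" using v0_conv(2) by blast
  show ?thesis using v0(2) v0_conv(1) K0 gap slope by (rule that)
qed

end

section \<open>The perturbed quotient\<close>

locale perturbed_moreau_yosida_setting = moreau_yosida_setting \<sigma> \<phi> A B u0
  for \<sigma> :: "'a::metric_space topology" and \<phi> A B u0 +
  fixes P :: "real \<Rightarrow> 'a \<Rightarrow> ereal" and \<epsilon> :: "real \<Rightarrow> real" and ut :: "real \<Rightarrow> 'a" and u :: 'a
    and A' B' :: real and u1 :: 'a and M :: real
  assumes P_lower: "\<And>e x. 0 < e \<Longrightarrow> ereal (- A' - B' * (dist x u1)\<^sup>2) \<le> P e x"
    and A'_pos: "0 < A'" and B'_pos: "0 < B'"
    and P_bounded: "\<And>en s x. (\<forall>n. 0 < en n) \<Longrightarrow> en \<longlonglongrightarrow> 0 \<Longrightarrow>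
        (\<exists>M. \<forall>n m. dist (s n) (s m) \<le> M) \<Longrightarrow> limitin \<sigma> s x sequentially \<Longrightarrow>
        (\<exists>M::real. \<forall>n. \<bar>P (en n) (s n)\<bar> \<le> ereal M)"
    and eps_pos: "\<And>\<tau>. 0 < \<tau> \<Longrightarrow> 0 < \<epsilon> \<tau>"
    and eps_lim: "((\<lambda>\<tau>. \<epsilon> \<tau> / \<tau>) \<longlongrightarrow> 0) (at_right 0)"
    and ut_conv: "limitin \<sigma> ut u (at_right 0)"
    and ut_bdd: "\<And>\<tau>. 0 < \<tau> \<Longrightarrow>
        \<phi> (ut \<tau>) + ereal (\<epsilon> \<tau>) * P (\<epsilon> \<tau>) (ut \<tau>) \<le> ereal M \<and> dist (ut \<tau>) u \<le> M"
begin

definition slope_quotient :: "real \<Rightarrow> ereal" where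
  "slope_quotient \<tau> = ((\<phi> (ut \<tau>) + ereal (\<epsilon> \<tau>) * P (\<epsilon> \<tau>) (ut \<tau>))
     - moreau_yosida \<tau> (\<lambda>x. \<phi> x + ereal (\<epsilon> \<tau>) * P (\<epsilon> \<tau>) x) (ut \<tau>)) / ereal \<tau>"

lemma phi_ut_bounded:
  assumes "0 < \<tau>" "\<epsilon> \<tau> \<le> 1"
  shows "\<exists>c. \<phi> (ut \<tau>) = ereal c \<and> c \<le> M + A' + B' * (M + dist u u1)\<^sup>2"
proof -
  have B'_dist: "0 \<le> B' * (dist (ut \<tau>) u1)\<^sup>2" using B'_pos by simp
  have "dist (ut \<tau>) u1 \<le> M + dist u u1"
    using ut_bdd[OF assms(1)] dist_triangle[of "ut \<tau>" u1 u] by simp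
  then have "(dist (ut \<tau>) u1)\<^sup>2 \<le> (M + dist u u1)\<^sup>2" by (intro power_mono) auto
  then have "M - (- A' - B' * (dist (ut \<tau>) u1)\<^sup>2) \<le> M + A' + B' * (M + dist u u1)\<^sup>2"
    using B'_pos by (simp add: mult_left_mono)
  moreover have "\<phi> (ut \<tau>) \<le> ereal (M - (- A' - B' * (dist (ut \<tau>) u1)\<^sup>2))"
    using B'_dist ut_bdd[OF assms(1)] P_lower[OF eps_pos[OF assms(1)]] eps_pos[OF assms(1)] assms(2)
      A'_pos phi_not_MInf
    by (intro ereal_bound_from_perturbed_bound) auto
  ultimately show ?thesis using phi_not_MInf[of "ut \<tau>"] by (cases "\<phi> (ut \<tau>)") auto
qed

lemma eps_along_sequence:
  assumes "t \<longlonglongrightarrow> 0" "\<And>n. 0 < t n"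
  shows "(\<lambda>n. \<epsilon> (t n) / t n) \<longlonglongrightarrow> 0" and "(\<lambda>n. \<epsilon> (t n)) \<longlonglongrightarrow> 0"
proof -
  have "filterlim t (at_right 0) sequentially"
    using assms by (intro tendsto_imp_filterlim_at_right) auto
  then show ratio: "(\<lambda>n. \<epsilon> (t n) / t n) \<longlonglongrightarrow> 0"
    using filterlim_compose[OF eps_lim] by blast
  have "(\<lambda>n. \<epsilon> (t n) / t n * t n) \<longlonglongrightarrow> 0 * 0"
    by (intro tendsto_mult ratio assms(1))
  then show "(\<lambda>n. \<epsilon> (t n)) \<longlonglongrightarrow> 0" using assms(2) by (simp add: less_imp_neq[symmetric])
qed

lemma perturbation_quotient_vanishes:
  assumes t: "t \<longlonglongrightarrow> 0" "\<And>n. 0 < t n"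
    and x: "limitin \<sigma> x u sequentially" "\<And>n. dist (x n) u \<le> K"
    and y: "limitin \<sigma> y u sequentially" "\<And>n. dist (y n) u \<le> K"
  obtains a b where "\<And>n. P (\<epsilon> (t n)) (x n) = ereal (a n)" "\<And>n. P (\<epsilon> (t n)) (y n) = ereal (b n)"
    and "(\<lambda>n. \<epsilon> (t n) / t n * (a n - b n)) \<longlonglongrightarrow> 0"
proof -
  have e: "\<forall>n. 0 < \<epsilon> (t n)" using eps_pos t(2) by blast
  note eps = eps_along_sequence[OF t]
  obtain Ka where Ka: "\<And>n. \<bar>P (\<epsilon> (t n)) (x n)\<bar> \<le> ereal Ka"
    using P_bounded[OF e eps(2) bounded_dist_imp_bounded_pairwise[OF x(2)] x(1)] by blast
  obtain Kb where Kb: "\<And>n. \<bar>P (\<epsilon> (t n)) (y n)\<bar> \<le> ereal Kb"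
    using P_bounded[OF e eps(2) bounded_dist_imp_bounded_pairwise[OF y(2)] y(1)] by blast
  define a where "a n = real_of_ereal (P (\<epsilon> (t n)) (x n))" for n
  define b where "b n = real_of_ereal (P (\<epsilon> (t n)) (y n))" for n
  have a: "P (\<epsilon> (t n)) (x n) = ereal (a n)" "\<bar>a n\<bar> \<le> Ka" for n
    using ereal_abs_le_imp_real[OF Ka[of n]] unfolding a_def by auto
  have b: "P (\<epsilon> (t n)) (y n) = ereal (b n)" "\<bar>b n\<bar> \<le> Kb" for n
    using ereal_abs_le_imp_real[OF Kb[of n]] unfolding b_def by auto
  have "norm (\<epsilon> (t n) / t n * (a n - b n)) \<le> \<epsilon> (t n) / t n * (Ka + Kb)" for n
  proof -
    have "0 \<le> \<epsilon> (t n) / t n" using e t(2)[of n] by (simp add: less_imp_le)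
    moreover have "\<bar>a n - b n\<bar> \<le> Ka + Kb" using a(2)[of n] b(2)[of n] by linarith
    ultimately have "\<epsilon> (t n) / t n * \<bar>a n - b n\<bar> \<le> \<epsilon> (t n) / t n * (Ka + Kb)"
      by (rule mult_left_mono[rotated])
    then show ?thesis using \<open>0 \<le> \<epsilon> (t n) / t n\<close> by (simp only: real_norm_def abs_mult abs_of_nonneg)
  qed
  moreover have "(\<lambda>n. \<epsilon> (t n) / t n * (Ka + Kb)) \<longlonglongrightarrow> 0"
    using tendsto_mult_left_zero[OF eps(1)] by simp
  ultimately have "(\<lambda>n. \<epsilon> (t n) / t n * (a n - b n)) \<longlonglongrightarrow> 0"
    by (metis (no_types, lifting) Lim_null_comparison always_eventually)
  with a(1) b(1) show ?thesis by (rule that)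
qed

lemma slope_quotient_along_sequence:
  assumes t: "t \<longlonglongrightarrow> 0" "\<And>n. 0 < t n" "\<And>n. t n \<le> 1/(8*B)" "\<And>n. \<epsilon> (t n) \<le> 1"
    and q: "0 < q" "q < 1" "1 \<le> N"
  obtains s e where "\<And>n. ereal (q * (1 - q^N) / 2 * (s n)\<^sup>2 + e n) \<le> slope_quotient (t n)"
    and "e \<longlonglongrightarrow> 0" and "relaxed_slope \<sigma> \<phi> u \<le> liminf (\<lambda>n. ereal (s n))"
proof -
  define w where "w n = ut (t n)" for n
  have w_lim: "limitin \<sigma> w u sequentially"
    unfolding w_def by (rule limitin_at_right_sequentially[OF ut_conv t(1,2)])
  have w_dist: "dist (w n) u \<le> M" for n using ut_bdd[OF t(2)] unfolding w_def by blast
  obtain c where c: "\<And>n. \<phi> (w n) = ereal (c n)" "\<And>n. c n \<le> M + A' + B' * (M + dist u u1)\<^sup>2"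
    using phi_ut_bounded[OF t(2) t(4)] unfolding w_def by metis
  obtain v0 c0 K0 s where v0: "\<And>n. \<phi> (v0 n) = ereal (c0 n)" "limitin \<sigma> v0 u sequentially"
    "\<And>n. dist (v0 n) u \<le> K0"
    and gap: "\<And>n. (s n)\<^sup>2 * t n * q * (1 - q^N) / 2 \<le> c n - (c0 n + (dist (v0 n) (w n))\<^sup>2/(2 * t n))"
    and slope: "relaxed_slope \<sigma> \<phi> u \<le> liminf (\<lambda>n. ereal (s n))"
    using prox_gap_along_sequence[OF w_lim w_dist c t(1-3) q] by metis
  obtain a b where a: "\<And>n. P (\<epsilon> (t n)) (w n) = ereal (a n)" and b: "\<And>n. P (\<epsilon> (t n)) (v0 n) = ereal (b n)"
    and e: "(\<lambda>n. \<epsilon> (t n) / t n * (a n - b n)) \<longlonglongrightarrow> 0"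
    using perturbation_quotient_vanishes[OF t(1,2) w_lim _ v0(2), of "max M K0"]
      order_trans[OF w_dist max.cobounded1] order_trans[OF v0(3) max.cobounded2] by blast
  have "ereal (q * (1 - q^N) / 2 * (s n)\<^sup>2 + \<epsilon> (t n) / t n * (a n - b n)) \<le> slope_quotient (t n)" for n
  proof -
    define D where "D = (dist (v0 n) (w n))\<^sup>2/(2 * t n)"
    have "q * (1 - q^N) / 2 * (s n)\<^sup>2 = (s n)\<^sup>2 * t n * q * (1 - q^N) / 2 / t n"
      using t(2)[of n] by simp
    also have "\<dots> \<le> (c n - (c0 n + D)) / t n"
      using gap[of n] t(2)[of n] unfolding D_def by (intro divide_right_mono) auto
    finally have "q * (1 - q^N) / 2 * (s n)\<^sup>2 + \<epsilon> (t n) / t n * (a n - b n)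
        \<le> (c n - (c0 n + D)) / t n + \<epsilon> (t n) / t n * (a n - b n)" by simp
    also have "\<dots> = (c n + \<epsilon> (t n) * a n - (c0 n + \<epsilon> (t n) * b n + D)) / t n"
      by (simp add: diff_divide_distrib add_divide_distrib right_diff_distrib)
    also have "ereal \<dots> \<le> slope_quotient (t n)"
      unfolding slope_quotient_def w_def[symmetric] D_def
      by (rule perturbed_gap_lower_bound[OF t(2) c(1) a v0(1) b])
    finally show ?thesis by simp
  qed
  then show ?thesis using e slope by (rule that)
qed

lemma slope_quotient_eventually_gt:
  assumes \<tau>: "\<tau> \<longlonglongrightarrow> 0" "\<And>n. 0 < \<tau> n" "\<And>n. \<tau> n \<le> 1/(8*B)" "\<And>n. \<epsilon> (\<tau> n) \<le> 1"
    and q: "0 < q" "q < 1" "1 \<le> N"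
    and l: "0 \<le> l" "l = 0 \<or> ereal l < relaxed_slope \<sigma> \<phi> u"
    and t: "t < q * (1 - q^N) / 2 * l\<^sup>2"
  shows "\<forall>\<^sub>F n in sequentially. ereal t < slope_quotient (\<tau> n)"
proof -
  define \<kappa> where "\<kappa> = q * (1 - q^N) / 2"
  have \<kappa>: "0 \<le> \<kappa>" unfolding \<kappa>_def using q by (simp add: power_le_one)
  obtain s e where quotient: "\<And>n. ereal (\<kappa> * (s n)\<^sup>2 + e n) \<le> slope_quotient (\<tau> n)"
    and e: "e \<longlonglongrightarrow> 0" and slope: "relaxed_slope \<sigma> \<phi> u \<le> liminf (\<lambda>n. ereal (s n))"
    using slope_quotient_along_sequence[OF \<tau> q] unfolding \<kappa>_def by blast
  have "\<forall>\<^sub>F n in sequentially. \<kappa> * l\<^sup>2 \<le> \<kappa> * (s n)\<^sup>2"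
    using l(2)
  proof
    assume "ereal l < relaxed_slope \<sigma> \<phi> u"
    then have "ereal l < liminf (\<lambda>n. ereal (s n))" using slope by (rule less_le_trans)
    then have "\<forall>\<^sub>F n in sequentially. l < s n" by (auto dest: less_LiminfD)
    then show ?thesis
    proof eventually_elim
      case (elim n)
      then have "l\<^sup>2 \<le> (s n)\<^sup>2" using l(1) by (intro power_mono) auto
      then show ?case using \<kappa> by (rule mult_left_mono)
    qed
  qed (simp add: \<kappa>)
  moreover have "\<forall>\<^sub>F n in sequentially. \<bar>e n\<bar> < \<kappa> * l\<^sup>2 - t"
    using tendstoD[OF e, of "\<kappa> * l\<^sup>2 - t"] t unfolding \<kappa>_def by (simp add: dist_real_def)
  ultimately show ?thesis
  proof eventually_elim
    case (elim n)
    then have "ereal t < ereal (\<kappa> * (s n)\<^sup>2 + e n)" by simp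
    then show ?case using quotient[of n] by (rule less_le_trans)
  qed
qed

lemma half_relaxed_slope_square_le_liminf:
  "(relaxed_slope \<sigma> \<phi> u)\<^sup>2 / 2 \<le> Liminf (at_right 0) slope_quotient"
  unfolding le_Liminf_iff
proof (intro allI impI)
  fix y assume "y < (relaxed_slope \<sigma> \<phi> u)\<^sup>2 / 2"
  then obtain t l where t: "y \<le> ereal t" and l: "0 \<le> l" "l = 0 \<or> ereal l < relaxed_slope \<sigma> \<phi> u"
    and "t < l\<^sup>2 / 2"
    using ereal_less_half_square_real[OF relaxed_slope_nonneg] by metis
  then obtain q N where q: "0 < q" "q < 1" "1 \<le> N" and t_less: "t < q * (1 - q^N) / 2 * l\<^sup>2"
    using exists_geometric_factor by (metis zero_le_power2)
  have "\<forall>\<^sub>F \<tau> in at_right 0. \<epsilon> \<tau> / \<tau> < 1" using eps_lim by (rule order_tendstoD) simp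
  then obtain b where b: "0 < b" "\<And>\<tau>. 0 < \<tau> \<Longrightarrow> \<tau> < b \<Longrightarrow> \<epsilon> \<tau> < \<tau>"
    unfolding eventually_at_right_field by (auto simp: divide_less_eq)
  have "\<forall>\<^sub>F \<tau> in at_right 0. ereal t < slope_quotient \<tau>"
  proof (rule sequentially_imp_eventually_at_right)
    show "0 < min b (min (1/(8*B)) 1)" using b B_pos by simp
    fix \<tau> :: "nat \<Rightarrow> real"
    assume \<tau>: "\<And>n. 0 < \<tau> n" "\<And>n. \<tau> n < min b (min (1/(8*B)) 1)" "\<tau> \<longlonglongrightarrow> 0"
    have "\<epsilon> (\<tau> n) \<le> 1" "\<tau> n \<le> 1/(8*B)" for n
      using b(2)[OF \<tau>(1)[of n]] \<tau>(2)[of n] by simp_all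
    then show "\<forall>\<^sub>F n in sequentially. ereal t < slope_quotient (\<tau> n)"
      using slope_quotient_eventually_gt[OF \<tau>(3,1) _ _ q l t_less] by blast
  qed
  then show "\<forall>\<^sub>F \<tau> in at_right 0. y < slope_quotient \<tau>"
    by eventually_elim (use t in \<open>rule le_less_trans\<close>)
qed

end


theorem proposition8p1:
  fixes \<sigma> :: "'a::complete_space topology"
    and \<phi> :: "'a \<Rightarrow> ereal"
    and P :: "real \<Rightarrow> 'a \<Rightarrow> ereal"
    and \<epsilon> :: "real \<Rightarrow> real"
    and ut :: "real \<Rightarrow> 'a"
    and u :: 'a
  assumes sigma_top: "topspace \<sigma> = UNIV" "Hausdorff_space \<sigma>"
    and sigma_comp: "sigma_compatible \<sigma>"
    and phi_proper: "\<And>x. \<phi> x \<noteq> -\<infinity>" "\<exists>x. \<phi> x \<noteq> \<infinity>"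
    and phi_lower: "\<exists>A B u0. A > 0 \<and> B > 0 \<and>
        (\<forall>x. \<phi> x \<ge> ereal (- A - B * (dist x u0)\<^sup>2))"
    and phi_lsc: "\<And>s x. (\<exists>M. \<forall>n m. dist (s n) (s m) \<le> M) \<Longrightarrow> limitin \<sigma> s x sequentially
        \<Longrightarrow> liminf (\<lambda>n. \<phi> (s n)) \<ge> \<phi> x"
    and phi_compact: "\<And>s :: nat \<Rightarrow> 'a. (\<exists>M::real. \<forall>n m. dist (s n) (s m) \<le> M \<and> \<phi> (s n) \<le> ereal M)
        \<Longrightarrow> \<exists>r x. strict_mono r \<and> limitin \<sigma> (s \<circ> r) x sequentially"
    and P_proper: "\<And>e x. e > 0 \<Longrightarrow> P e x \<noteq> -\<infinity>"
    and P_lower: "\<exists>A B u0. A > 0 \<and> B > 0 \<and>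
        (\<forall>e>0. \<forall>x. P e x \<ge> ereal (- A - B * (dist x u0)\<^sup>2))"
    and P_bounded: "\<And>en s x. (\<forall>n. en n > 0) \<Longrightarrow> en \<longlonglongrightarrow> 0 \<Longrightarrow>
        (\<exists>M. \<forall>n m. dist (s n) (s m) \<le> M) \<Longrightarrow> limitin \<sigma> s x sequentially \<Longrightarrow>
        (\<exists>M::real. \<forall>n. \<bar>P (en n) (s n)\<bar> \<le> ereal M)"
    and eps_pos: "\<And>\<tau>. \<tau> > 0 \<Longrightarrow> \<epsilon> \<tau> > 0"
    and eps_lim: "((\<lambda>\<tau>. \<epsilon> \<tau> / \<tau>) \<longlongrightarrow> 0) (at_right 0)"
    and ut_conv: "limitin \<sigma> ut u (at_right 0)"
    and ut_bdd: "\<exists>M::real. \<forall>\<tau>>0.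
        \<phi> (ut \<tau>) + ereal (\<epsilon> \<tau>) * P (\<epsilon> \<tau>) (ut \<tau>) \<le> ereal M \<and> dist (ut \<tau>) u \<le> M"
  shows "Liminf (at_right 0) (\<lambda>\<tau>.
           ((\<phi> (ut \<tau>) + ereal (\<epsilon> \<tau>) * P (\<epsilon> \<tau>) (ut \<tau>))
             - moreau_yosida \<tau> (\<lambda>x. \<phi> x + ereal (\<epsilon> \<tau>) * P (\<epsilon> \<tau>) x) (ut \<tau>)) / ereal \<tau>)
         \<ge> (relaxed_slope \<sigma> \<phi> u)\<^sup>2 / 2"
proof -
  obtain A B u0 where "0 < B" "\<forall>x. \<phi> x \<ge> ereal (- A - B * (dist x u0)\<^sup>2)"
    using phi_lower by blast
  moreover obtain A' B' u1 where "0 < A'" "0 < B'"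
    "\<forall>e>0. \<forall>x. P e x \<ge> ereal (- A' - B' * (dist x u1)\<^sup>2)"
    using P_lower by blast
  moreover obtain M where "\<forall>\<tau>>0. \<phi> (ut \<tau>) + ereal (\<epsilon> \<tau>) * P (\<epsilon> \<tau>) (ut \<tau>) \<le> ereal M \<and> dist (ut \<tau>) u \<le> M"
    using ut_bdd by blast
  ultimately interpret perturbed_moreau_yosida_setting \<sigma> \<phi> A B u0 P \<epsilon> ut u A' B' u1 M
    using sigma_top(1) sigma_comp phi_proper(1) phi_lsc phi_compact P_bounded eps_pos eps_lim ut_conv
    by unfold_locales auto
  show ?thesis using half_relaxed_slope_square_le_liminf unfolding slope_quotient_def .
qed

end
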